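(* Let $p$ be a prime and $n,k$ positive integers with $(p,k-1)=1$ and $n=\mathrm{ind}_p(k)$; let $G=G(p,n,k)=\langle a,b;\ a^p=1,\ b^n=1,\ b^{-1}ab=a^k\rangle$, $R=\{k^j-1 \bmod p: j\in\mathbb{Z}_n\}$ and $L=\{1-k^j \bmod p: j\in\mathbb{Z}_n\}$. Then the following are equivalent: (i) $\mathrm{P}(G)=\Lambda(G)$; (ii) $\mathrm{P}(G)\cong\Lambda(G)$; (iii) $|\mathrm{P}(G)|=|\Lambda(G)|$; (iv) $|R^*|=|L^*|$.
   Context: $\mathrm{ind}_p(k)$ is the least positive integer $d$ with $k^d\equiv 1\pmod p$. $S^*$ denotes the multiplicative subsemigroup of $\mathbb{Z}_p$ generated by $S$. Commutators are $[x,y]=x^{-1}y^{-1}xy$. For $g\in G$, $\rho(g),\lambda(g):G\to G$ are $(x)\rho(g)=[x,g]$, $(x)\lambda(g)=[g,x]$. $\mathrm{P}(G)$ and $\Lambda(G)$ are the subsemigroups (under composition) of the semigroup of all maps $G\to G$ generated by $\{\rho(g):g\in G\}$ and $\{\lambda(g):g\in G\}$ respectively. *)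

theory Defs
  imports "HOL-Number_Theory.Number_Theory" "HOL-Algebra.Group" "HOL-Library.FuncSet"
begin

text \<open>ind_p(k) is Pocklington's ord p k (least d>0 with k^d = 1 mod p, for k coprime to p).\<close>

text \<open>Concrete model of G(p,n,k) = <a,b; a^p=1, b^n=1, b^-1 a b = a^k>:
  the pair (j,i) with j in Z_n, i in Z_p stands for b^j a^i.  Since a^i b^j = b^j a^(i k^j),
  (b^j1 a^i1)(b^j2 a^i2) = b^(j1+j2) a^(i1 k^j2 + i2).  Here a = (0,1), b = (1,0).\<close>
definition metacyclic :: "nat \<Rightarrow> nat \<Rightarrow> nat \<Rightarrow> (nat \<times> nat) monoid" where
  "metacyclic p n k =
     \<lparr> carrier = {0..<n} \<times> {0..<p},
       mult = (\<lambda>(j1, i1) (j2, i2). ((j1 + j2) mod n, (i1 * k ^ j2 + i2) mod p)),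
       one = (0, 0) \<rparr>"

definition commutator :: "('a, 'b) monoid_scheme \<Rightarrow> 'a \<Rightarrow> 'a \<Rightarrow> 'a" where
  "commutator G x y = inv\<^bsub>G\<^esub> x \<otimes>\<^bsub>G\<^esub> inv\<^bsub>G\<^esub> y \<otimes>\<^bsub>G\<^esub> x \<otimes>\<^bsub>G\<^esub> y"

definition rho_map :: "('a, 'b) monoid_scheme \<Rightarrow> 'a \<Rightarrow> ('a \<Rightarrow> 'a)" where
  "rho_map G g = (\<lambda>x\<in>carrier G. commutator G x g)"

definition lambda_map :: "('a, 'b) monoid_scheme \<Rightarrow> 'a \<Rightarrow> ('a \<Rightarrow> 'a)" where
  "lambda_map G g = (\<lambda>x\<in>carrier G. commutator G g x)"

inductive_set map_semigroup :: "'a set \<Rightarrow> ('a \<Rightarrow> 'a) set \<Rightarrow> ('a \<Rightarrow> 'a) set"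
  for A :: "'a set" and S :: "('a \<Rightarrow> 'a) set" where
  gen: "f \<in> S \<Longrightarrow> f \<in> map_semigroup A S"
| comp: "f \<in> map_semigroup A S \<Longrightarrow> h \<in> map_semigroup A S \<Longrightarrow> compose A h f \<in> map_semigroup A S"

definition Pgrp :: "('a, 'b) monoid_scheme \<Rightarrow> ('a \<Rightarrow> 'a) set" where
  "Pgrp G = map_semigroup (carrier G) {rho_map G g | g. g \<in> carrier G}"

definition Lgrp :: "('a, 'b) monoid_scheme \<Rightarrow> ('a \<Rightarrow> 'a) set" where
  "Lgrp G = map_semigroup (carrier G) {lambda_map G g | g. g \<in> carrier G}"

definition map_semigroup_iso :: "'a set \<Rightarrow> ('a \<Rightarrow> 'a) set \<Rightarrow> ('a \<Rightarrow> 'a) set \<Rightarrow> bool" where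
  "map_semigroup_iso A S T \<longleftrightarrow>
     (\<exists>\<phi>. bij_betw \<phi> S T \<and>
          (\<forall>f\<in>S. \<forall>h\<in>S. \<phi> (compose A h f) = compose A (\<phi> h) (\<phi> f)))"

inductive_set mult_subsemigroup :: "int \<Rightarrow> int set \<Rightarrow> int set"
  for p :: int and S :: "int set" where
  gen: "x \<in> S \<Longrightarrow> x \<in> mult_subsemigroup p S"
| mult: "x \<in> mult_subsemigroup p S \<Longrightarrow> y \<in> mult_subsemigroup p S \<Longrightarrow> (x * y) mod p \<in> mult_subsemigroup p S"

definition Rset :: "nat \<Rightarrow> nat \<Rightarrow> nat \<Rightarrow> int set" where
  "Rset p n k = {(int k ^ j - 1) mod int p | j. j < n}"

definition Lset :: "nat \<Rightarrow> nat \<Rightarrow> nat \<Rightarrow> int set" where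
  "Lset p n k = {(1 - int k ^ j) mod int p | j. j < n}"

end

theory Submission imports Defs begin

(* Write b^j a^i as the pair (j, i).  Every commutator lies in <a>, namely
   [(j,i),(m,c)] = a^(c(1-k^j) + i(k^m-1)), so each rho(g) and lambda(g) is one of the maps
   comm_map s t : (j,i) |-> a^(s(1-k^j) + t i), with t = k^m-1 for rho and t = 1-k^m for lambda.
   These compose like an affine group, comm_map s2 t2 o comm_map s1 t1 = comm_map (s1 t2) (t1 t2),
   and since p does not divide 1-k, comm_map s t determines s and t modulo p.  Composing with a
   map whose multiplier t is a unit adjusts s freely, so P(G) consists of the comm_map s t with
   t in R* and has p |R*| elements, and likewise for Lambda(G) and L*.  Finally R* and L* contain 0,
   and their nonzero parts are finite multiplicatively closed subsets, i.e. subgroups, of the cyclic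
   group (Z/p)^x; a subgroup of order d is the set of roots of x^d = 1, so |R*| = |L*| already forces
   R* = L* and hence P(G) = Lambda(G). *)

definition mult_closed :: "int \<Rightarrow> int set \<Rightarrow> bool" where
  "mult_closed P T \<longleftrightarrow> (\<forall>x\<in>T. \<forall>y\<in>T. (x * y) mod P \<in> T)"

lemma mult_closed_mult_subsemigroup: "mult_closed P (mult_subsemigroup P S)"
  by (simp add: mult_closed_def mult_subsemigroup.mult)

lemma mult_subsemigroup_subset:
  assumes "P > 0" "S \<subseteq> {0..<P}"
  shows "mult_subsemigroup P S \<subseteq> {0..<P}"
proof
  fix x assume "x \<in> mult_subsemigroup P S"
  then show "x \<in> {0..<P}"
    by (induction rule: mult_subsemigroup.induct) (use assms in auto)
qed

lemma mult_closed_pow_card_cong_one: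
  fixes P :: int
  assumes "prime P" "finite H" "H \<subseteq> {1..<P}" "mult_closed P H" "x \<in> H"
  shows "[x ^ card H = 1] (mod P)"
proof -
  have coprime: "coprime h P" if "h \<in> H" for h
  proof -
    have "0 < h" "h < P" using that assms(3) by auto
    then have "\<not> P dvd h" by (auto dest: zdvd_imp_le)
    then show ?thesis using assms(1) by (simp add: prime_imp_coprime coprime_commute)
  qed
  define f where "f h = (x * h) mod P" for h
  have "inj_on f H"
  proof (rule inj_onI)
    fix h1 h2 assume h: "h1 \<in> H" "h2 \<in> H" "f h1 = f h2"
    then have "[x * h1 = x * h2] (mod P)" by (simp add: f_def cong_def)
    then have "[h1 = h2] (mod P)" using coprime[OF assms(5)] by (simp add: cong_mult_lcancel)
    moreover have "h1 mod P = h1" "h2 mod P = h2" using h assms(3) by (auto intro: mod_pos_pos_trivial)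
    ultimately show "h1 = h2" by (simp add: cong_def)
  qed
  moreover have "f ` H \<subseteq> H" using assms(4,5) by (auto simp: f_def mult_closed_def)
  ultimately have "f ` H = H" using endo_inj_surj[OF assms(2)] by blast
  then have "prod id H = prod f H"
    using prod.reindex[OF \<open>inj_on f H\<close>, of id] by simp
  moreover have "[prod f H = prod ((*) x) H] (mod P)"
    by (rule cong_prod) (simp add: f_def cong_def)
  ultimately have "[x ^ card H * prod id H = 1 * prod id H] (mod P)"
    by (simp add: prod.distrib cong_sym)
  moreover have "coprime (prod id H) P" using coprime by (simp add: prod_coprime_left)
  ultimately show ?thesis using cong_mult_rcancel by blast
qed

lemma card_int_roots_mod_prime_le:
  fixes p d :: nat
  assumes "prime p" "d > 0"
  shows "card {x \<in> {0..<int p}. [x ^ d = 1] (mod int p)} \<le> d"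
proof -
  let ?roots = "{x \<in> {..<p}. [x ^ d = 1] (mod p)}"
  have "{x \<in> {0..<int p}. [x ^ d = 1] (mod int p)} \<subseteq> int ` ?roots"
  proof
    fix x assume x: "x \<in> {x \<in> {0..<int p}. [x ^ d = 1] (mod int p)}"
    then have "[int (nat x ^ d) = int 1] (mod int p)" by simp
    then have "[nat x ^ d = 1] (mod p)" by (simp only: cong_int_iff)
    then show "x \<in> int ` ?roots" using x by (auto intro!: image_eqI[of x int "nat x"])
  qed
  then have "card {x \<in> {0..<int p}. [x ^ d = 1] (mod int p)} \<le> card (int ` ?roots)"
    by (intro card_mono) auto
  also have "\<dots> \<le> d"
    using roots_mod_prime_bound[OF assms, of 1] card_image_le[of ?roots int] by simp
  finally show ?thesis .
qed

lemma mult_closed_eq_roots: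
  fixes p :: nat
  assumes "prime p" "finite H" "H \<subseteq> {1..<int p}" "mult_closed (int p) H" "H \<noteq> {}"
  shows "H = {x \<in> {0..<int p}. [x ^ card H = 1] (mod int p)}"
proof (rule card_seteq)
  show "H \<subseteq> {x \<in> {0..<int p}. [x ^ card H = 1] (mod int p)}"
    using mult_closed_pow_card_cong_one[of "int p" H] assms by auto
  show "card {x \<in> {0..<int p}. [x ^ card H = 1] (mod int p)} \<le> card H"
    using card_int_roots_mod_prime_le assms by (simp add: card_gt_0_iff)
qed (rule finite_subset[of _ "{0..<int p}"], auto)

lemma mult_closed_Diff_zero:
  fixes p :: nat
  assumes "prime p" "T \<subseteq> {0..<int p}" "mult_closed (int p) T"
  shows "mult_closed (int p) (T - {0})"
  unfolding mult_closed_def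
proof (intro ballI)
  fix x y assume "x \<in> T - {0}" "y \<in> T - {0}"
  then have "0 < x" "x < int p" "0 < y" "y < int p" using assms(2) by force+
  then have "\<not> int p dvd x" "\<not> int p dvd y" by (auto dest: zdvd_imp_le)
  then have "\<not> int p dvd x * y" using assms(1) by (simp add: prime_dvd_mult_iff)
  then show "(x * y) mod int p \<in> T - {0}"
    using assms(3) \<open>x \<in> T - {0}\<close> \<open>y \<in> T - {0}\<close> by (auto simp: mult_closed_def)
qed

lemma mult_closed_Diff_zero_eq_roots:
  fixes p :: nat
  assumes "prime p" "T \<subseteq> {0..<int p}" "mult_closed (int p) T" "T - {0} \<noteq> {}"
  shows "T - {0} = {x \<in> {0..<int p}. [x ^ card (T - {0}) = 1] (mod int p)}"
proof (rule mult_closed_eq_roots[OF assms(1) _ _ mult_closed_Diff_zero[OF assms(1-3)] assms(4)])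
  show "finite (T - {0})" using assms(2) finite_subset by auto
  show "T - {0} \<subseteq> {1..<int p}" using assms(2) by force
qed

lemma mult_closed_eq_if_card_eq:
  fixes p :: nat
  assumes "prime p"
    and T1: "T1 \<subseteq> {0..<int p}" "0 \<in> T1" "mult_closed (int p) T1"
    and T2: "T2 \<subseteq> {0..<int p}" "0 \<in> T2" "mult_closed (int p) T2"
    and "card T1 = card T2"
  shows "T1 = T2"
proof -
  have fin: "finite T1" "finite T2" using T1(1) T2(1) finite_subset by auto
  then have card: "card (T1 - {0}) = card (T2 - {0})"
    using T1(2) T2(2) assms(8) by (simp add: card_Diff_singleton)
  have "T1 - {0} = T2 - {0}"
  proof (cases "T1 - {0} = {}")
    case True
    then show ?thesis using card fin by (metis card_0_eq finite_Diff)
  next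
    case False
    then have "T2 - {0} \<noteq> {}" using card fin by (metis card_0_eq finite_Diff)
    then show ?thesis
      using mult_closed_Diff_zero_eq_roots[OF assms(1) T1(1,3) False]
        mult_closed_Diff_zero_eq_roots[OF assms(1) T2(1,3)] card by simp
  qed
  then show ?thesis using T1(2) T2(2) by blast
qed

lemma (in group) commutator_eqI:
  assumes "x \<in> carrier G" "g \<in> carrier G" "y \<in> carrier G" "x \<otimes> g = g \<otimes> x \<otimes> y"
  shows "commutator G x g = y"
proof -
  have "inv g \<otimes> (x \<otimes> g) = x \<otimes> y"
    using assms by (simp add: inv_solve_left' m_assoc)
  then show ?thesis
    using assms by (simp add: commutator_def m_assoc inv_solve_left')
qed

locale metacyclic_ind =
  fixes p n k :: nat
  assumes prime: "prime p" and n_pos: "n > 0"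
    and coprime_k_minus_1: "coprime p (k - 1)" and n_eq_ord: "n = ord p k"
begin

abbreviation "G \<equiv> metacyclic p n k"

lemma p_gt_1: "p > 1"
  using prime prime_gt_1_nat by blast

lemma carrier_G: "carrier G = {0..<n} \<times> {0..<p}"
  and mult_G: "(j1, i1) \<otimes>\<^bsub>G\<^esub> (j2, i2) = ((j1 + j2) mod n, (i1 * k ^ j2 + i2) mod p)"
  and one_G: "\<one>\<^bsub>G\<^esub> = (0, 0)"
  by (simp_all add: metacyclic_def)

lemma k_pow_n_cong: "[k ^ n = 1] (mod p)"
  using ord_works[of k p] by (simp add: n_eq_ord)

lemma k_pow_mod_n: "[k ^ (a mod n) = k ^ a] (mod p)"
proof -
  have "[(k ^ n) ^ (a div n) * k ^ (a mod n) = 1 ^ (a div n) * k ^ (a mod n)] (mod p)"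
    by (intro cong_mult cong_pow k_pow_n_cong cong_refl)
  then show ?thesis
    by (simp add: power_mult[symmetric] power_add[symmetric] cong_sym_eq)
qed

lemma k_not_cong_1: "\<not> [k = 1] (mod p)"
proof
  assume "[k = 1] (mod p)"
  then have "p dvd k - 1" by (rule cong_to_1_nat)
  then have "is_unit p" by (rule coprime_common_divisor[OF coprime_k_minus_1 dvd_refl])
  then show False using p_gt_1 by simp
qed

lemma two_le_n: "n \<ge> 2"
proof -
  have "n \<noteq> 1" using n_eq_ord k_not_cong_1 ord_eq_Suc_0_iff[of p k] by auto
  then show ?thesis using n_pos by simp
qed

lemma coprime_1_minus_k: "coprime (1 - int k) (int p)"
proof -
  have "\<not> int p dvd 1 - int k"
    using k_not_cong_1 by (metis cong_iff_dvd_diff cong_int_iff cong_sym of_nat_1)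
  then show ?thesis using prime by (simp add: prime_imp_coprime coprime_commute)
qed

lemma group_G: "group G"
proof (rule groupI)
  fix x y z assume "x \<in> carrier G" "y \<in> carrier G" "z \<in> carrier G"
  obtain j1 i1 j2 i2 j3 i3 where xyz: "x = (j1, i1)" "y = (j2, i2)" "z = (j3, i3)"
    by (cases x, cases y, cases z) auto
  have "[i1 * k ^ ((j2 + j3) mod n) + (i2 * k ^ j3 + i3) mod p = i1 * k ^ (j2 + j3) + (i2 * k ^ j3 + i3)] (mod p)"
    by (intro cong_add cong_mult cong_refl k_pow_mod_n) (simp add: cong_def)
  also have "i1 * k ^ (j2 + j3) + (i2 * k ^ j3 + i3) = (i1 * k ^ j2 + i2) * k ^ j3 + i3"
    by (simp add: algebra_simps power_add)
  also have "[\<dots> = (i1 * k ^ j2 + i2) mod p * k ^ j3 + i3] (mod p)"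
    by (intro cong_add cong_mult cong_refl) (simp add: cong_def)
  finally have "((i1 * k ^ j2 + i2) mod p * k ^ j3 + i3) mod p = (i1 * k ^ ((j2 + j3) mod n) + (i2 * k ^ j3 + i3) mod p) mod p"
    by (simp add: cong_def)
  moreover have "((j1 + j2) mod n + j3) mod n = (j1 + (j2 + j3) mod n) mod n"
    by (simp only: mod_add_left_eq mod_add_right_eq add.assoc)
  ultimately show "x \<otimes>\<^bsub>G\<^esub> y \<otimes>\<^bsub>G\<^esub> z = x \<otimes>\<^bsub>G\<^esub> (y \<otimes>\<^bsub>G\<^esub> z)"
    by (simp only: xyz mult_G)
next
  fix x assume "x \<in> carrier G"
  then obtain j i where x: "x = (j, i)" "j < n" "i < p" by (auto simp: carrier_G)
  define y where "y = ((n - j) mod n, ((p - i) * k ^ (n - j)) mod p)"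
  have "[(p - i) * k ^ (n - j) mod p * k ^ j + i = (p - i) * k ^ (n - j) * k ^ j + i] (mod p)"
    by (intro cong_add cong_mult cong_refl) (simp add: cong_def)
  also have "(p - i) * k ^ (n - j) * k ^ j + i = (p - i) * k ^ n + i"
    using x by (simp add: mult.assoc power_add[symmetric])
  also have "[\<dots> = (p - i) * 1 + i] (mod p)"
    by (intro cong_add cong_mult cong_refl k_pow_n_cong)
  also have "(p - i) * 1 + i = p" using x by simp
  finally have "((p - i) * k ^ (n - j) mod p * k ^ j + i) mod p = 0"
    by (simp add: cong_def)
  moreover have "((n - j) mod n + j) mod n = 0"
    using x by (simp add: mod_add_left_eq)
  ultimately have "y \<otimes>\<^bsub>G\<^esub> x = \<one>\<^bsub>G\<^esub>"
    by (simp add: x y_def mult_G one_G)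
  moreover have "y \<in> carrier G" using n_pos p_gt_1 by (simp add: y_def carrier_G)
  ultimately show "\<exists>y\<in>carrier G. y \<otimes>\<^bsub>G\<^esub> x = \<one>\<^bsub>G\<^esub>" by blast
qed (use n_pos p_gt_1 in \<open>auto simp: carrier_G mult_G one_G\<close>)

definition modp :: "int \<Rightarrow> nat" where
  "modp z = nat (z mod int p)"

lemma int_modp: "int (modp z) = z mod int p"
  using p_gt_1 by (simp add: modp_def)

lemma modp_less: "modp z < p"
  using p_gt_1 by (simp add: modp_def nat_less_iff)

lemma modp_eq_iff: "modp z = modp z' \<longleftrightarrow> [z = z'] (mod int p)"
  by (metis int_modp of_nat_eq_iff cong_def)

lemma commutator_G:
  assumes "j < n" "i < p" "m < n" "c < p"
  shows "commutator G (j, i) (m, c) = (0, modp (int c * (1 - int k ^ j) + int i * (int k ^ m - 1)))"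
proof (rule group.commutator_eqI[OF group_G])
  show "(j, i) \<in> carrier G" "(m, c) \<in> carrier G"
    "(0, modp (int c * (1 - int k ^ j) + int i * (int k ^ m - 1))) \<in> carrier G"
    using assms n_pos modp_less by (auto simp: carrier_G)
  define t where "t = int c * (1 - int k ^ j) + int i * (int k ^ m - 1)"
  have "int ((i * k ^ m + c) mod p) = (int c * int k ^ j + int i + t) mod int p"
    by (simp add: t_def of_nat_mod algebra_simps)
  also have "\<dots> = int (((c * k ^ j + i) mod p * k ^ 0 + modp t) mod p)"
    by (simp add: of_nat_mod int_modp mod_add_eq)
  finally have "(i * k ^ m + c) mod p = ((c * k ^ j + i) mod p * k ^ 0 + modp t) mod p"
    by (simp only: of_nat_eq_iff)
  moreover have "(j + m) mod n = ((m + j) mod n + 0) mod n" by (simp add: add.commute)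
  ultimately show "(j, i) \<otimes>\<^bsub>G\<^esub> (m, c) = (m, c) \<otimes>\<^bsub>G\<^esub> (j, i) \<otimes>\<^bsub>G\<^esub> (0, modp t)"
    by (simp only: mult_G)
qed

definition comm_map :: "int \<Rightarrow> int \<Rightarrow> nat \<times> nat \<Rightarrow> nat \<times> nat" where
  "comm_map s t = (\<lambda>x\<in>carrier G. (0, modp (s * (1 - int k ^ fst x) + t * int (snd x))))"

lemma rho_map_G:
  assumes "(m, c) \<in> carrier G"
  shows "rho_map G (m, c) = comm_map (int c) (int k ^ m - 1)"
  unfolding rho_map_def comm_map_def
proof (rule restrict_ext)
  fix x assume "x \<in> carrier G"
  then show "commutator G x (m, c) = (0, modp (int c * (1 - int k ^ fst x) + (int k ^ m - 1) * int (snd x)))"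
    using assms by (cases x) (simp add: commutator_G carrier_G mult.commute)
qed

lemma lambda_map_G:
  assumes "(m, c) \<in> carrier G"
  shows "lambda_map G (m, c) = comm_map (- int c) (1 - int k ^ m)"
  unfolding lambda_map_def comm_map_def
proof (rule restrict_ext)
  fix x assume "x \<in> carrier G"
  then show "commutator G (m, c) x = (0, modp (- int c * (1 - int k ^ fst x) + (1 - int k ^ m) * int (snd x)))"
    using assms by (cases x) (simp add: commutator_G carrier_G algebra_simps)
qed

lemma compose_comm_map:
  "compose (carrier G) (comm_map a2 b2) (comm_map a1 b1) = comm_map (a1 * b2) (b1 * b2)"
  unfolding compose_def comm_map_def[of "a1 * b2"]
proof (rule restrict_ext)
  fix x assume "x \<in> carrier G"
  define t where "t = a1 * (1 - int k ^ fst x) + b1 * int (snd x)"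
  have "[b2 * (t mod int p) = a1 * b2 * (1 - int k ^ fst x) + b1 * b2 * int (snd x)] (mod int p)"
    by (simp add: cong_def mod_mult_right_eq t_def algebra_simps)
  then show "comm_map a2 b2 (comm_map a1 b1 x) = (0, modp (a1 * b2 * (1 - int k ^ fst x) + b1 * b2 * int (snd x)))"
    using \<open>x \<in> carrier G\<close> n_pos modp_less
    by (simp add: comm_map_def t_def[symmetric] carrier_G int_modp modp_eq_iff)
qed

lemma comm_map_eq_iff:
  "comm_map a b = comm_map a' b' \<longleftrightarrow> [a = a'] (mod int p) \<and> [b = b'] (mod int p)"
proof
  assume eq: "comm_map a b = comm_map a' b'"
  have "(0, 1) \<in> carrier G" "(1, 0) \<in> carrier G" using two_le_n p_gt_1 by (auto simp: carrier_G)
  then have "modp b = modp b'" "modp (a * (1 - int k)) = modp (a' * (1 - int k))"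
    using fun_cong[OF eq, of "(0, 1)"] fun_cong[OF eq, of "(1, 0)"] by (simp_all add: comm_map_def)
  then have "[b = b'] (mod int p)" "[a * (1 - int k) = a' * (1 - int k)] (mod int p)"
    by (simp_all only: modp_eq_iff)
  then show "[a = a'] (mod int p) \<and> [b = b'] (mod int p)"
    using coprime_1_minus_k by (simp add: cong_mult_rcancel)
next
  assume "[a = a'] (mod int p) \<and> [b = b'] (mod int p)"
  then show "comm_map a b = comm_map a' b'"
    unfolding comm_map_def by (intro restrict_ext) (simp add: modp_eq_iff cong_add cong_mult)
qed

definition comm_maps :: "int set \<Rightarrow> (nat \<times> nat \<Rightarrow> nat \<times> nat) set" where
  "comm_maps S = {comm_map a b | a b. b \<in> S}"

lemma comm_map_mod: "comm_map a (b mod int p) = comm_map a b"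
  by (simp add: comm_map_eq_iff cong_def)

lemma comm_map_in_map_semigroup:
  assumes "0 \<in> S" "b \<in> mult_subsemigroup (int p) S"
  shows "comm_map a b \<in> map_semigroup (carrier G) (comm_maps S)"
  using assms(2)
proof (induction arbitrary: a rule: mult_subsemigroup.induct)
  case (gen b)
  then show ?case by (auto simp: comm_maps_def intro: map_semigroup.gen)
next
  case (mult x y)
  show ?case
  proof (cases "int p dvd x * y")
    case True
    then have "comm_map a ((x * y) mod int p) = comm_map a 0" by (simp add: dvd_imp_mod_0)
    then show ?thesis using assms(1) by (auto simp: comm_maps_def intro: map_semigroup.gen)
  next
    case False
    then have "\<not> int p dvd y" by auto
    then have "coprime y (int p)"
      using prime_imp_coprime[of "int p" y] prime by (simp add: coprime_commute)
    then obtain y' where y': "[y * y' = 1] (mod int p)" using cong_solve_coprime_int by blast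
    then have "[a * y' * y = a] (mod int p)"
      using cong_scalar_left[OF y', of a] by (simp add: ac_simps)
    then have "comm_map a ((x * y) mod int p) = compose (carrier G) (comm_map 0 y) (comm_map (a * y') x)"
      by (simp add: compose_comm_map comm_map_mod comm_map_eq_iff cong_sym)
    then show ?thesis using mult.IH by (simp add: map_semigroup.comp)
  qed
qed

lemma map_semigroup_comm_maps:
  assumes "0 \<in> S"
  shows "map_semigroup (carrier G) (comm_maps S) = comm_maps (mult_subsemigroup (int p) S)"
proof
  show "map_semigroup (carrier G) (comm_maps S) \<subseteq> comm_maps (mult_subsemigroup (int p) S)"
  proof
    fix f assume "f \<in> map_semigroup (carrier G) (comm_maps S)"
    then show "f \<in> comm_maps (mult_subsemigroup (int p) S)"
    proof (induction rule: map_semigroup.induct)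
      case (gen f)
      then show ?case by (auto simp: comm_maps_def intro: mult_subsemigroup.gen)
    next
      case (comp f h)
      then obtain a1 b1 a2 b2 where "f = comm_map a1 b1" "h = comm_map a2 b2"
        "b1 \<in> mult_subsemigroup (int p) S" "b2 \<in> mult_subsemigroup (int p) S"
        by (auto simp: comm_maps_def)
      then have "compose (carrier G) h f = comm_map (a1 * b2) ((b1 * b2) mod int p)"
        by (simp add: compose_comm_map comm_map_mod)
      moreover have "(b1 * b2) mod int p \<in> mult_subsemigroup (int p) S"
        using \<open>b1 \<in> _\<close> \<open>b2 \<in> _\<close> by (rule mult_subsemigroup.mult)
      ultimately show ?case by (auto simp: comm_maps_def)
    qed
  qed
  show "comm_maps (mult_subsemigroup (int p) S) \<subseteq> map_semigroup (carrier G) (comm_maps S)"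
    using comm_map_in_map_semigroup[OF assms] by (auto simp: comm_maps_def)
qed

lemma comm_maps_image:
  assumes "\<sigma> * \<sigma> = 1"
    and F: "\<And>m c. m < n \<Longrightarrow> c < p \<Longrightarrow> F (m, c) = comm_map (\<sigma> * int c) (v m)"
  shows "{F g | g. g \<in> carrier G} = comm_maps {v m mod int p | m. m < n}"
proof
  show "{F g | g. g \<in> carrier G} \<subseteq> comm_maps {v m mod int p | m. m < n}"
  proof
    fix f assume "f \<in> {F g | g. g \<in> carrier G}"
    then obtain m c where "(m, c) \<in> carrier G" "f = F (m, c)" by force
    then have "m < n" "c < p" "f = F (m, c)" by (simp_all add: carrier_G)
    then have "f = comm_map (\<sigma> * int c) (v m mod int p)" by (simp add: F comm_map_mod)
    then show "f \<in> comm_maps {v m mod int p | m. m < n}"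
      using \<open>m < n\<close> by (auto simp: comm_maps_def)
  qed
next
  show "comm_maps {v m mod int p | m. m < n} \<subseteq> {F g | g. g \<in> carrier G}"
  proof
    fix f assume "f \<in> comm_maps {v m mod int p | m. m < n}"
    then obtain a m where f: "f = comm_map a (v m)" and "m < n"
      by (auto simp: comm_maps_def comm_map_mod)
    define c where "c = nat ((\<sigma> * a) mod int p)"
    have "c < p" using p_gt_1 by (simp add: c_def nat_less_iff)
    have "[\<sigma> * int c = \<sigma> * (\<sigma> * a)] (mod int p)"
      using p_gt_1 by (simp add: c_def cong_def mod_mult_right_eq)
    then have "f = F (m, c)"
      using \<open>m < n\<close> \<open>c < p\<close> assms(1) by (simp add: f F comm_map_eq_iff mult.assoc[symmetric] cong_sym)
    then show "f \<in> {F g | g. g \<in> carrier G}"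
      using \<open>m < n\<close> \<open>c < p\<close> by (auto simp: carrier_G)
  qed
qed

lemma rho_maps_G: "{rho_map G g | g. g \<in> carrier G} = comm_maps (Rset p n k)"
  unfolding Rset_def by (rule comm_maps_image[of 1]) (simp_all add: rho_map_G carrier_G)

lemma lambda_maps_G: "{lambda_map G g | g. g \<in> carrier G} = comm_maps (Lset p n k)"
  unfolding Lset_def by (rule comm_maps_image[of "-1"]) (simp_all add: lambda_map_G carrier_G)

lemma card_comm_maps:
  assumes "T \<subseteq> {0..<int p}"
  shows "card (comm_maps T) = p * card T"
proof -
  have "comm_maps T = (\<lambda>(a, b). comm_map a b) ` ({0..<int p} \<times> T)"
  proof
    show "comm_maps T \<subseteq> (\<lambda>(a, b). comm_map a b) ` ({0..<int p} \<times> T)"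
    proof
      fix f assume "f \<in> comm_maps T"
      then obtain a b where "f = comm_map a b" "b \<in> T" by (auto simp: comm_maps_def)
      then have "f = comm_map (a mod int p) b" by (simp add: comm_map_eq_iff cong_def)
      then show "f \<in> (\<lambda>(a, b). comm_map a b) ` ({0..<int p} \<times> T)"
        using \<open>b \<in> T\<close> p_gt_1 by (intro image_eqI[of _ _ "(a mod int p, b)"]) auto
    qed
  qed (auto simp: comm_maps_def)
  moreover have "inj_on (\<lambda>(a, b). comm_map a b) ({0..<int p} \<times> T)"
  proof (rule inj_onI)
    fix u v assume uv: "u \<in> {0..<int p} \<times> T" "v \<in> {0..<int p} \<times> T"
      and eq: "(\<lambda>(a, b). comm_map a b) u = (\<lambda>(a, b). comm_map a b) v"
    obtain a b a' b' where u: "u = (a, b)" and v: "v = (a', b')" by fastforce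
    have "[a = a'] (mod int p)" "[b = b'] (mod int p)" using eq by (simp_all add: u v comm_map_eq_iff)
    moreover have "a \<in> {0..<int p}" "a' \<in> {0..<int p}" "b \<in> {0..<int p}" "b' \<in> {0..<int p}"
      using uv assms by (auto simp: u v)
    ultimately show "u = v" by (auto simp: u v intro: cong_less_imp_eq_int)
  qed
  ultimately show ?thesis by (simp add: card_image card_cartesian_product)
qed

lemma zero_in_Rset: "0 \<in> Rset p n k"
  and zero_in_Lset: "0 \<in> Lset p n k"
  using n_pos by (force simp: Rset_def Lset_def)+

lemma Rset_subset: "Rset p n k \<subseteq> {0..<int p}"
  and Lset_subset: "Lset p n k \<subseteq> {0..<int p}"
  using p_gt_1 by (auto simp: Rset_def Lset_def)

lemma Pgrp_G: "Pgrp G = comm_maps (mult_subsemigroup (int p) (Rset p n k))"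
  unfolding Pgrp_def rho_maps_G by (rule map_semigroup_comm_maps[OF zero_in_Rset])

lemma Lgrp_G: "Lgrp G = comm_maps (mult_subsemigroup (int p) (Lset p n k))"
  unfolding Lgrp_def lambda_maps_G by (rule map_semigroup_comm_maps[OF zero_in_Lset])

end

theorem theorem6p7:
  fixes p n k :: nat
  assumes "prime p" and "n > 0" and "k > 0"
    and "coprime p (k - 1)" and "n = ord p k"
  defines "G \<equiv> metacyclic p n k"
  shows "(Pgrp G = Lgrp G \<longleftrightarrow> map_semigroup_iso (carrier G) (Pgrp G) (Lgrp G))
       \<and> (map_semigroup_iso (carrier G) (Pgrp G) (Lgrp G) \<longleftrightarrow> card (Pgrp G) = card (Lgrp G))
       \<and> (card (Pgrp G) = card (Lgrp G) \<longleftrightarrow>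
            card (mult_subsemigroup (int p) (Rset p n k)) = card (mult_subsemigroup (int p) (Lset p n k)))"
proof -
  interpret metacyclic_ind p n k using assms(1,2,4,5) by unfold_locales
  let ?R = "mult_subsemigroup (int p) (Rset p n k)"
  let ?L = "mult_subsemigroup (int p) (Lset p n k)"
  have R: "?R \<subseteq> {0..<int p}" "0 \<in> ?R" "mult_closed (int p) ?R"
    using mult_subsemigroup_subset[OF _ Rset_subset] p_gt_1 zero_in_Rset
    by (auto intro: mult_subsemigroup.gen simp: mult_closed_mult_subsemigroup)
  have L: "?L \<subseteq> {0..<int p}" "0 \<in> ?L" "mult_closed (int p) ?L"
    using mult_subsemigroup_subset[OF _ Lset_subset] p_gt_1 zero_in_Lset
    by (auto intro: mult_subsemigroup.gen simp: mult_closed_mult_subsemigroup)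
  have iv_iii: "card (Pgrp G) = card (Lgrp G) \<longleftrightarrow> card ?R = card ?L"
    using card_comm_maps[OF R(1)] card_comm_maps[OF L(1)] p_gt_1 by (simp add: G_def Pgrp_G Lgrp_G)
  have "card ?R = card ?L \<Longrightarrow> Pgrp G = Lgrp G"
    using mult_closed_eq_if_card_eq[OF prime R L] by (simp add: G_def Pgrp_G Lgrp_G)
  moreover have "Pgrp G = Lgrp G \<Longrightarrow> map_semigroup_iso (carrier G) (Pgrp G) (Lgrp G)"
    unfolding map_semigroup_iso_def by (intro exI[of _ id]) simp
  moreover have "map_semigroup_iso (carrier G) (Pgrp G) (Lgrp G) \<Longrightarrow> card (Pgrp G) = card (Lgrp G)"
    unfolding map_semigroup_iso_def using bij_betw_same_card by blast
  ultimately show ?thesis using iv_iii by blast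
qed

end
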